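(* Every $p$-stabilisation $\alpha_I$ of $\Pi$ which is of non-critical slope (i.e. $r_I<\#\mathrm{Crit}(\Pi)$) is of Shalika type.
   Context: Let $p$ be an odd prime and $n\ge 1$. Fix an isomorphism $\overline{\mathbb{Q}}_p\cong\mathbb{C}$; $v_p$ denotes the $p$-adic valuation on $\mathbb{C}_p$ normalised by $v_p(p)=1$. Let $\Pi$ be a cuspidal automorphic representation of $\mathrm{GL}_{2n}(\mathbb{A}_{\mathbb{Q}})$ which is cohomological with respect to an integral weight $\mu=(\mu_1,\dots,\mu_{2n})\in\mathbb{Z}^{2n}$, which is the transfer of a globally generic cuspidal automorphic representation of $\mathrm{GSpin}_{2n+1}(\mathbb{A}_{\mathbb{Q}})$, and which is unramified at $p$. Then $\mu$ is dominant ($\mu_1\ge\cdots\ge\mu_{2n}$) and pure: there is an integer $w$ (the purity weight) with $\mu_i+\mu_{2n+1-i}=w$ for all $i$. The Hodge–Tate weights are $h_i=\mu_i+2n-i$ ($1\le i\le 2n$). Set $\mathrm{Crit}(\Pi)=\{j\in\mathbb{Z}:\mu_n\ge j\ge\mu_{n+1}\}$, so $\#\mathrm{Crit}(\Pi)=h_n-h_{n+1}$. Write $\Pi_p\cong\mathrm{Ind}_{B(\mathbb{Q}_p)}^{\mathrm{GL}_{2n}(\mathbb{Q}_p)}(|\cdot|^{(2n-1)/2}\lambda_p)$ (normalised parabolic induction from the upper triangular Borel $B$) for an unramified character $\lambda_p$ of the diagonal torus; the Satake parameters are $\alpha_i=\lambda_{p,i}(p)$, where $\lambda_{p,i}$ is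 the $i$-th diagonal component. They are indexed so that $v_p(\alpha_1)\ge\cdots\ge v_p(\alpha_{2n})$ and $\alpha_i\alpha_{2n+1-i}=\lambda$ for all $i$, for a fixed $\lambda$ with $v_p(\lambda)=2n-1+w$ (possible by the transfer from $\mathrm{GSpin}_{2n+1}$). Known fact (Hida), used freely: the Newton polygon (the piecewise linear curve through $(0,0)$ and $(j,\sum_{i=1}^{j}v_p(\alpha_{2n+1-i}))$, $j=1,\dots,2n$) lies on or above the Hodge polygon (through $(0,0)$ and $(j,\sum_{i=1}^{j}h_{2n+1-i})$, $j=1,\dots,2n$), and their endpoints coincide. For $I=(i_1,\dots,i_n)$ with $1\le i_1<\dots<i_n\le 2n$ put $\alpha_I=\alpha_{i_1}\cdots\alpha_{i_n}$ (a "$p$-stabilisation") and $r_I=v_p(\alpha_I)-\sum_{i=n+1}^{2n}h_i$. $\alpha_I$ is of Shalika type if $I$ contains exactly one element of each pair $\{i,2n+1-i\}$, $i=1,\dots,n$; it is of non-critical slope if $r_I<\#\mathrm{Crit}(\Pi)$. *)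

theory Defs
  imports Complex_Main "HOL-Computational_Algebra.Primes"
begin

text \<open>Indices run over 1..2n. Weights are integer-valued functions on indices.\<close>

definition hodge_wt :: "nat \<Rightarrow> (nat \<Rightarrow> int) \<Rightarrow> nat \<Rightarrow> int" where
  "hodge_wt n \<mu> i = \<mu> i + int (2*n) - int i"

definition Crit :: "nat \<Rightarrow> (nat \<Rightarrow> int) \<Rightarrow> int set" where
  "Crit n \<mu> = {j. \<mu> n \<ge> j \<and> j \<ge> \<mu> (n+1)}"

definition stabilisation_sets :: "nat \<Rightarrow> nat set set" where
  "stabilisation_sets n = {I. I \<subseteq> {1..2*n} \<and> card I = n}"

definition alpha_I :: "(nat \<Rightarrow> complex) \<Rightarrow> nat set \<Rightarrow> complex" where
  "alpha_I \<alpha> I = (\<Prod>i\<in>I. \<alpha> i)"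

definition slope_r :: "(complex \<Rightarrow> real) \<Rightarrow> (nat \<Rightarrow> complex) \<Rightarrow> nat \<Rightarrow> (nat \<Rightarrow> int) \<Rightarrow> nat set \<Rightarrow> real" where
  "slope_r v \<alpha> n \<mu> I = v (alpha_I \<alpha> I) - (\<Sum>i = n+1..2*n. real_of_int (hodge_wt n \<mu> i))"

definition non_critical_slope :: "(complex \<Rightarrow> real) \<Rightarrow> (nat \<Rightarrow> complex) \<Rightarrow> nat \<Rightarrow> (nat \<Rightarrow> int) \<Rightarrow> nat set \<Rightarrow> bool" where
  "non_critical_slope v \<alpha> n \<mu> I \<longleftrightarrow> slope_r v \<alpha> n \<mu> I < real (card (Crit n \<mu>))"

definition shalika_type :: "nat \<Rightarrow> nat set \<Rightarrow> bool" where
  "shalika_type n I \<longleftrightarrow> (\<forall>i\<in>{1..n}. card (I \<inter> {i, 2*n+1-i}) = 1)"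

end

theory Submission
  imports Defs
begin

text \<open>If I is not of Shalika type then, since its n elements are spread over the n pairs
  {i, 2n+1-i}, it contains a whole pair, which contributes v(lam) = 2n-1+w to v(alpha_I).
  By Newton-above-Hodge the remaining n-2 indices contribute at least the n-2 smallest Hodge
  weights, so r_I >= 2n-1+w - h_(n+1) - h_(n+2) = mu_n - mu_(n+2) + 2, which exceeds
  #Crit = mu_n - mu_(n+1) + 1 by dominance.\<close>

lemma sum_tail_le_sum_subset:
  fixes f :: "nat \<Rightarrow> 'a::{semiring_1,ordered_comm_monoid_add}"
  assumes "antimono_on {1..N} f" and "J \<subseteq> {1..N}"
  shows "(\<Sum>i = N + 1 - card J..N. f i) \<le> sum f J"
proof -
  define t where "t = N + 1 - card J"
  define T where "T = {t..N}"
  have "finite J" using assms(2) finite_subset by blast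
  have "card J \<le> N" using card_mono[OF _ assms(2)] by simp
  then have "card T = card J" unfolding T_def t_def by simp
  then have card_eq: "card (T - J) = card (J - T)"
    using \<open>finite J\<close> by (simp add: card_Diff_subset_Int Int_commute T_def t_def card_Diff_subset)
  \<comment> \<open>Exchange argument: T - J and J - T have the same size and are separated by t.\<close>
  have "sum f (T - J) \<le> of_nat (card (T - J)) * f t"
  proof (rule sum_bounded_above)
    fix i assume "i \<in> T - J"
    then show "f i \<le> f t" using assms(1) \<open>card J \<le> N\<close>
      unfolding T_def t_def by (auto intro!: monotone_onD[OF assms(1)])
  qed
  also have "\<dots> \<le> sum f (J - T)"
  proof (unfold card_eq, rule sum_bounded_below)
    fix i assume i: "i \<in> J - T"
    then have "card J > 0" using \<open>finite J\<close> card_gt_0_iff by blast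
    with i show "f t \<le> f i" using assms \<open>card J \<le> N\<close>
      unfolding T_def t_def by (auto intro!: monotone_onD[OF assms(1)])
  qed
  finally have "sum f (T - J) \<le> sum f (J - T)" .
  then have "sum f (T \<inter> J) + sum f (T - J) \<le> sum f (J \<inter> T) + sum f (J - T)"
    by (simp add: Int_commute add_left_mono)
  then show ?thesis
    using sum.Int_Diff[OF \<open>finite J\<close>, of f T] unfolding T_def t_def
    by (simp flip: sum.Int_Diff)
qed

lemma shalika_type_if_no_pair_subset:
  assumes "I \<in> stabilisation_sets n" and "\<forall>k\<in>{1..n}. \<not> {k, 2*n+1-k} \<subseteq> I"
  shows "shalika_type n I"
  unfolding shalika_type_def
proof
  fix k assume k: "k \<in> {1..n}"
  \<comment> \<open>pair_index i names the pair containing i; with no full pair inside I it is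
    injective on I, hence onto {1..n}.\<close>
  define pair_index where "pair_index i = min i (2*n+1-i)" for i
  have I: "I \<subseteq> {1..2*n}" "card I = n" using assms(1) unfolding stabilisation_sets_def by auto
  have "inj_on pair_index I"
  proof (rule inj_onI, rule ccontr)
    fix i j assume "i \<in> I" "j \<in> I" "pair_index i = pair_index j" "i \<noteq> j"
    then have "{pair_index i, 2*n+1 - pair_index i} \<subseteq> I" "pair_index i \<in> {1..n}"
      using I(1) unfolding pair_index_def by (auto simp: min_def split: if_splits)
    then show False using assms(2) by blast
  qed
  moreover have "pair_index ` I \<subseteq> {1..n}"
    using I(1) unfolding pair_index_def by (auto simp: min_def subset_iff)
  ultimately have "pair_index ` I = {1..n}"
    using I(2) by (simp add: card_subset_eq card_image)
  then obtain i where "i \<in> I" "pair_index i = k" using k by (metis imageE)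
  then have "I \<inter> {k, 2*n+1-k} = {i}"
    using assms(2) k I(1) unfolding pair_index_def by (auto simp: min_def split: if_splits)
  then show "card (I \<inter> {k, 2*n+1-k}) = 1" by simp
qed

lemma valuation_prod:
  fixes v :: "'a::semidom \<Rightarrow> real"
  assumes v_mult: "\<And>x y. x \<noteq> 0 \<Longrightarrow> y \<noteq> 0 \<Longrightarrow> v (x * y) = v x + v y"
    and "finite A" and "\<And>i. i \<in> A \<Longrightarrow> f i \<noteq> 0"
  shows "v (\<Prod>i\<in>A. f i) = (\<Sum>i\<in>A. v (f i))"
  using assms(2,3)
proof (induction A rule: finite_induct)
  case empty
  show ?case using v_mult[of 1 1] by simp
next
  case (insert x A)
  then show ?case using v_mult[of "f x" "prod f A"] by (simp add: prod_zero_iff)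
qed

lemma card_Crit:
  assumes "\<mu> (n+1) \<le> \<mu> n"
  shows "int (card (Crit n \<mu>)) = \<mu> n - \<mu> (n+1) + 1"
proof -
  have "Crit n \<mu> = {\<mu> (n+1)..\<mu> n}" unfolding Crit_def by auto
  then show ?thesis using assms by simp
qed

locale satake_parameters =
  fixes n :: nat and \<mu> :: "nat \<Rightarrow> int" and w :: int
    and \<alpha> :: "nat \<Rightarrow> complex" and lam :: complex and v :: "complex \<Rightarrow> real"
  assumes v_mult: "\<And>x y. x \<noteq> 0 \<Longrightarrow> y \<noteq> 0 \<Longrightarrow> v (x * y) = v x + v y"
    and dominant: "\<And>i j. 1 \<le> i \<Longrightarrow> i \<le> j \<Longrightarrow> j \<le> 2*n \<Longrightarrow> \<mu> i \<ge> \<mu> j"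
    and pure: "\<And>i. i \<in> {1..2*n} \<Longrightarrow> \<mu> i + \<mu> (2*n+1-i) = w"
    and alpha_nz: "\<And>i. i \<in> {1..2*n} \<Longrightarrow> \<alpha> i \<noteq> 0"
    and val_order: "\<And>i j. 1 \<le> i \<Longrightarrow> i \<le> j \<Longrightarrow> j \<le> 2*n \<Longrightarrow> v (\<alpha> i) \<ge> v (\<alpha> j)"
    and pairing: "\<And>i. i \<in> {1..2*n} \<Longrightarrow> \<alpha> i * \<alpha> (2*n+1-i) = lam"
    and v_lambda: "v lam = real_of_int (int (2*n) - 1 + w)"
    and newton_hodge: "\<And>j. j \<in> {1..2*n} \<Longrightarrow>
          (\<Sum>i=1..j. v (\<alpha> (2*n+1-i))) \<ge> (\<Sum>i=1..j. real_of_int (hodge_wt n \<mu> (2*n+1-i)))"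
begin

lemma v_alpha_I:
  assumes "I \<subseteq> {1..2*n}"
  shows "v (alpha_I \<alpha> I) = (\<Sum>i\<in>I. v (\<alpha> i))"
  unfolding alpha_I_def
  by (rule valuation_prod[OF v_mult]) (use assms alpha_nz finite_subset in blast)+

lemma v_alpha_pair:
  assumes "i \<in> {1..2*n}"
  shows "v (\<alpha> i) + v (\<alpha> (2*n+1-i)) = v lam"
proof -
  have "2*n+1-i \<in> {1..2*n}" using assms by auto
  then have "v (\<alpha> i * \<alpha> (2*n+1-i)) = v (\<alpha> i) + v (\<alpha> (2*n+1-i))"
    by (intro v_mult alpha_nz assms)
  then show ?thesis using pairing[OF assms] by simp
qed

lemma hodge_tail_le_valuation_sum:
  assumes "J \<subseteq> {1..2*n}"
  shows "(\<Sum>i = 2*n+1 - card J..2*n. real_of_int (hodge_wt n \<mu> i)) \<le> (\<Sum>i\<in>J. v (\<alpha> i))"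
proof -
  have "card J \<le> 2*n" using card_mono[OF _ assms] by simp
  have reflect: "(\<Sum>i=1..card J. g (2*n+1-i)) = (\<Sum>i = 2*n+1 - card J..2*n. g i)"
    for g :: "nat \<Rightarrow> real"
    by (rule sum.reindex_bij_witness[where i="\<lambda>i. 2*n+1-i" and j="\<lambda>i. 2*n+1-i"])
      (use \<open>card J \<le> 2*n\<close> in auto)
  have "(\<Sum>i = 2*n+1 - card J..2*n. real_of_int (hodge_wt n \<mu> i))
      \<le> (\<Sum>i = 2*n+1 - card J..2*n. v (\<alpha> i))"
  proof (cases "card J = 0")
    case False
    then show ?thesis
      using newton_hodge[of "card J"] \<open>card J \<le> 2*n\<close>
        reflect[of "\<lambda>i. v (\<alpha> i)"] reflect[of "\<lambda>i. real_of_int (hodge_wt n \<mu> i)"]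
      by simp
  qed simp
  also have "\<dots> \<le> (\<Sum>i\<in>J. v (\<alpha> i))"
    by (rule sum_tail_le_sum_subset[OF monotone_onI assms]) (auto intro: val_order)
  finally show ?thesis .
qed

lemma slope_r_ge_if_pair_subset:
  assumes I: "I \<in> stabilisation_sets n" and k: "k \<in> {1..n}" "{k, 2*n+1-k} \<subseteq> I"
  shows "real_of_int (\<mu> n - \<mu> (n+1) + 2) \<le> slope_r v \<alpha> n \<mu> I"
proof -
  define h where "h i = real_of_int (hodge_wt n \<mu> i)" for i
  define J where "J = I - {k, 2*n+1-k}"
  have I_sub: "I \<subseteq> {1..2*n}" and "card I = n" using I unfolding stabilisation_sets_def by auto
  have "k \<noteq> 2*n+1-k" using k(1) by auto
  then have "card {k, 2*n+1-k} = 2" by simp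
  then have "card J = n - 2" and "n \<ge> 2"
    using k(2) \<open>card I = n\<close> card_mono[OF finite_subset[OF I_sub] k(2)]
    unfolding J_def by (simp_all add: card_Diff_subset finite_subset)
  have J_sub: "J \<subseteq> {1..2*n}" using I_sub unfolding J_def by blast
  have "v (alpha_I \<alpha> I) = (\<Sum>i\<in>J. v (\<alpha> i)) + (v (\<alpha> k) + v (\<alpha> (2*n+1-k)))"
    using v_alpha_I[OF I_sub] sum.subset_diff[OF k(2) finite_subset[OF I_sub]] \<open>k \<noteq> 2*n+1-k\<close>
    unfolding J_def by simp
  also have "\<dots> = (\<Sum>i\<in>J. v (\<alpha> i)) + v lam" using v_alpha_pair k(1) by simp
  finally have v_I: "v (alpha_I \<alpha> I) = (\<Sum>i\<in>J. v (\<alpha> i)) + v lam" .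
  have "2*n+1 - card J = n+3" using \<open>card J = n - 2\<close> \<open>n \<ge> 2\<close> by simp
  then have newton_J: "(\<Sum>i = n+3..2*n. h i) \<le> (\<Sum>i\<in>J. v (\<alpha> i))"
    using hodge_tail_le_valuation_sum[OF J_sub] unfolding h_def by simp
  have "{n+1..2*n} = insert (n+1) (insert (n+2) {n+3..2*n})" using \<open>n \<ge> 2\<close> by auto
  then have "(\<Sum>i = n+1..2*n. h i) = h (n+1) + h (n+2) + (\<Sum>i = n+3..2*n. h i)" by simp
  moreover have "h (n+1) + h (n+2) + real_of_int (\<mu> n - \<mu> (n+1) + 2) \<le> v lam"
  proof -
    have "\<mu> n + \<mu> (n+1) = w" using pure[of n] \<open>n \<ge> 2\<close> by (simp add: mult_2)
    moreover have "\<mu> (n+2) \<le> \<mu> (n+1)" using dominant \<open>n \<ge> 2\<close> by simp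
    moreover have "h (n+1) = real_of_int (\<mu> (n+1) + int n - 1)"
      and "h (n+2) = real_of_int (\<mu> (n+2) + int n - 2)"
      unfolding h_def hodge_wt_def by simp_all
    ultimately show ?thesis unfolding v_lambda by simp
  qed
  ultimately show ?thesis using v_I newton_J unfolding slope_r_def h_def by linarith
qed

theorem non_critical_slope_imp_shalika_type:
  assumes "n \<ge> 1" and I: "I \<in> stabilisation_sets n" and "non_critical_slope v \<alpha> n \<mu> I"
  shows "shalika_type n I"
proof (rule shalika_type_if_no_pair_subset[OF I], intro ballI notI)
  fix k assume "k \<in> {1..n}" "{k, 2*n+1-k} \<subseteq> I"
  then have "real_of_int (\<mu> n - \<mu> (n+1) + 2) \<le> slope_r v \<alpha> n \<mu> I"
    by (rule slope_r_ge_if_pair_subset[OF I])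
  moreover have "int (card (Crit n \<mu>)) = \<mu> n - \<mu> (n+1) + 1"
    using card_Crit dominant[of n "n+1"] \<open>n \<ge> 1\<close> by simp
  ultimately show False
    using \<open>non_critical_slope v \<alpha> n \<mu> I\<close> unfolding non_critical_slope_def by linarith
qed

end

theorem mainTheorem2:
  fixes p n :: nat and \<mu> :: "nat \<Rightarrow> int" and w :: int
    and \<alpha> :: "nat \<Rightarrow> complex" and lam :: complex and v :: "complex \<Rightarrow> real"
  assumes p: "prime p" "odd p"
    and n: "n \<ge> 1"
    and v_mult: "\<And>x y. x \<noteq> 0 \<Longrightarrow> y \<noteq> 0 \<Longrightarrow> v (x * y) = v x + v y"
    and v_ultra: "\<And>x y. x \<noteq> 0 \<Longrightarrow> y \<noteq> 0 \<Longrightarrow> x + y \<noteq> 0 \<Longrightarrow> v (x + y) \<ge> min (v x) (v y)"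
    and v_p: "v (of_nat p) = 1"
    and dominant: "\<And>i j. 1 \<le> i \<Longrightarrow> i \<le> j \<Longrightarrow> j \<le> 2*n \<Longrightarrow> \<mu> i \<ge> \<mu> j"
    and pure: "\<And>i. i \<in> {1..2*n} \<Longrightarrow> \<mu> i + \<mu> (2*n+1-i) = w"
    and alpha_nz: "\<And>i. i \<in> {1..2*n} \<Longrightarrow> \<alpha> i \<noteq> 0"
    and val_order: "\<And>i j. 1 \<le> i \<Longrightarrow> i \<le> j \<Longrightarrow> j \<le> 2*n \<Longrightarrow> v (\<alpha> i) \<ge> v (\<alpha> j)"
    and pairing: "\<And>i. i \<in> {1..2*n} \<Longrightarrow> \<alpha> i * \<alpha> (2*n+1-i) = lam"
    and lambda_nz: "lam \<noteq> 0"
    and v_lambda: "v lam = real_of_int (int (2*n) - 1 + w)"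
    and newton_hodge: "\<And>j. j \<in> {1..2*n} \<Longrightarrow>
          (\<Sum>i=1..j. v (\<alpha> (2*n+1-i))) \<ge> (\<Sum>i=1..j. real_of_int (hodge_wt n \<mu> (2*n+1-i)))"
    and endpoints: "(\<Sum>i=1..2*n. v (\<alpha> (2*n+1-i))) = (\<Sum>i=1..2*n. real_of_int (hodge_wt n \<mu> (2*n+1-i)))"
  shows "\<forall>I\<in>stabilisation_sets n. non_critical_slope v \<alpha> n \<mu> I \<longrightarrow> shalika_type n I"
proof -
  interpret satake_parameters n \<mu> w \<alpha> lam v
    by unfold_locales (fact assms)+
  show ?thesis using non_critical_slope_imp_shalika_type[OF n] by blast
qed

end
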